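(* Let $S$ be a proper restriction semigroup, and let $\cdot$ and $\circ$ be its underlying left and right partial actions of $S/\sigma$ on $P(S)$. Then: (1) $S$ satisfies condition $\mathrm{(EP)^r}$: for all $s,t,u\in S$, if $s\,\sigma\, tu$ then there exists $v\in S$ with $t^+s=tv$ and $u\,\sigma\, v$ — if and only if $\circ$ is strong; (2) $S$ satisfies condition $\mathrm{(EP)^l}$: for all $s,t,u\in S$, if $s\,\sigma\, ut$ then there exists $v\in S$ with $st^*=vt$ and $u\,\sigma\, v$ — if and only if $\cdot$ is strong.
   Context: A restriction semigroup is an algebra $(S,\cdot,{}^*,{}^+)$ where $(S,\cdot)$ is a semigroup and the identities $xx^*=x$, $x^*y^*=y^*x^*$, $(xy^* )^*=x^*y^*$, $x^*y=y(xy)^*$, $x^+x=x$, $x^+y^+=y^+x^+$, $(x^+y)^+=x^+y^+$, $xy^+=(xy)^+x$, $(x^+)^*=x^+$, $(x^* )^+=x^*$ hold. $P(S)=\{x^*\colon x\in S\}$ is the semilattice of projections; $\sigma$ is the least congruence identifying all projections; $S$ is proper if ($a^*=b^*$, $a\,\sigma\,b$) $\Rightarrow a=b$ and ($a^+=b^+$, $a\,\sigma\,b$) $\Rightarrow a=b$. Underlying partial actions: for $t\in S/\sigma$ and $e\in P(S)$, $t\cdot e$ is defined iff there is $a\in t$ with $a^*\ge e$, and then $t\cdot e=(ae)^+$; $e\circ t$ is defined iff there is $a\in t$ with $a^+\ge e$... equivalently $e\circ t$ is defined iff $e=t\cdot f$ for some $f$, and then $e\circ t=f$. A left partial action $\cdot$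 of a monoid $T$ is strong if for all $s,t\in T$ and $y$: whenever $t\cdot y$ and $(st)\cdot y$ are defined, $s\cdot(t\cdot y)$ is defined. A right partial action $\circ$ is strong if whenever $y\circ s$ and $y\circ(st)$ are defined, $(y\circ s)\circ t$ is defined. *)

theory Defs
  imports Main
begin

text \<open>A restriction semigroup on the whole of the type 'a, with multiplication m,
  star operation st (x^*) and plus operation pl (x^+).\<close>

definition restriction_semigroup ::
  "('a \<Rightarrow> 'a \<Rightarrow> 'a) \<Rightarrow> ('a \<Rightarrow> 'a) \<Rightarrow> ('a \<Rightarrow> 'a) \<Rightarrow> bool" where
  "restriction_semigroup m st pl \<longleftrightarrow>
     (\<forall>x y z. m (m x y) z = m x (m y z)) \<and>
     (\<forall>x. m x (st x) = x) \<and>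
     (\<forall>x y. m (st x) (st y) = m (st y) (st x)) \<and>
     (\<forall>x y. st (m x (st y)) = m (st x) (st y)) \<and>
     (\<forall>x y. m (st x) y = m y (st (m x y))) \<and>
     (\<forall>x. m (pl x) x = x) \<and>
     (\<forall>x y. m (pl x) (pl y) = m (pl y) (pl x)) \<and>
     (\<forall>x y. pl (m (pl x) y) = m (pl x) (pl y)) \<and>
     (\<forall>x y. m x (pl y) = m (pl (m x y)) x) \<and>
     (\<forall>x. st (pl x) = pl x) \<and>
     (\<forall>x. pl (st x) = st x)"

definition projections :: "('a \<Rightarrow> 'a) \<Rightarrow> 'a set" where
  "projections st = range st"

definition proj_le :: "('a \<Rightarrow> 'a \<Rightarrow> 'a) \<Rightarrow> 'a \<Rightarrow> 'a \<Rightarrow> bool" where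
  "proj_le m e f \<longleftrightarrow> e = m e f"

definition rs_congruence ::
  "('a \<Rightarrow> 'a \<Rightarrow> 'a) \<Rightarrow> ('a \<Rightarrow> 'a) \<Rightarrow> ('a \<Rightarrow> 'a) \<Rightarrow> ('a \<Rightarrow> 'a \<Rightarrow> bool) \<Rightarrow> bool" where
  "rs_congruence m st pl R \<longleftrightarrow> equivp R \<and>
     (\<forall>a b c. R a b \<longrightarrow> R (m a c) (m b c) \<and> R (m c a) (m c b)) \<and>
     (\<forall>a b. R a b \<longrightarrow> R (st a) (st b) \<and> R (pl a) (pl b))"

definition sigma ::
  "('a \<Rightarrow> 'a \<Rightarrow> 'a) \<Rightarrow> ('a \<Rightarrow> 'a) \<Rightarrow> ('a \<Rightarrow> 'a) \<Rightarrow> 'a \<Rightarrow> 'a \<Rightarrow> bool" where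
  "sigma m st pl a b \<longleftrightarrow>
     (\<forall>R. rs_congruence m st pl R \<and>
          (\<forall>e\<in>projections st. \<forall>f\<in>projections st. R e f) \<longrightarrow> R a b)"

definition sclass ::
  "('a \<Rightarrow> 'a \<Rightarrow> 'a) \<Rightarrow> ('a \<Rightarrow> 'a) \<Rightarrow> ('a \<Rightarrow> 'a) \<Rightarrow> 'a \<Rightarrow> 'a set" where
  "sclass m st pl a = {b. sigma m st pl a b}"

definition proper ::
  "('a \<Rightarrow> 'a \<Rightarrow> 'a) \<Rightarrow> ('a \<Rightarrow> 'a) \<Rightarrow> ('a \<Rightarrow> 'a) \<Rightarrow> bool" where
  "proper m st pl \<longleftrightarrow>
     (\<forall>a b. st a = st b \<and> sigma m st pl a b \<longrightarrow> a = b) \<and>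
     (\<forall>a b. pl a = pl b \<and> sigma m st pl a b \<longrightarrow> a = b)"

definition ldef :: "('a \<Rightarrow> 'a \<Rightarrow> 'a) \<Rightarrow> ('a \<Rightarrow> 'a) \<Rightarrow> 'a set \<Rightarrow> 'a \<Rightarrow> bool" where
  "ldef m st t e \<longleftrightarrow> (\<exists>a\<in>t. proj_le m e (st a))"

definition lact ::
  "('a \<Rightarrow> 'a \<Rightarrow> 'a) \<Rightarrow> ('a \<Rightarrow> 'a) \<Rightarrow> ('a \<Rightarrow> 'a) \<Rightarrow> 'a set \<Rightarrow> 'a \<Rightarrow> 'a" where
  "lact m st pl t e = pl (m (SOME a. a \<in> t \<and> proj_le m e (st a)) e)"

definition rdef :: "('a \<Rightarrow> 'a \<Rightarrow> 'a) \<Rightarrow> ('a \<Rightarrow> 'a) \<Rightarrow> 'a \<Rightarrow> 'a set \<Rightarrow> bool" where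
  "rdef m pl e t \<longleftrightarrow> (\<exists>a\<in>t. proj_le m e (pl a))"

definition ract ::
  "('a \<Rightarrow> 'a \<Rightarrow> 'a) \<Rightarrow> ('a \<Rightarrow> 'a) \<Rightarrow> ('a \<Rightarrow> 'a) \<Rightarrow> 'a \<Rightarrow> 'a set \<Rightarrow> 'a" where
  "ract m st pl e t = st (m e (SOME a. a \<in> t \<and> proj_le m e (pl a)))"

text \<open>Strongness. Elements of S/sigma are written as classes of representatives;
  the product of the classes of a and b is the class of m a b.\<close>
definition strong_left ::
  "('a \<Rightarrow> 'a \<Rightarrow> 'a) \<Rightarrow> ('a \<Rightarrow> 'a) \<Rightarrow> ('a \<Rightarrow> 'a) \<Rightarrow> bool" where
  "strong_left m st pl \<longleftrightarrow>
     (\<forall>a b. \<forall>y\<in>projections st.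
        ldef m st (sclass m st pl b) y \<and> ldef m st (sclass m st pl (m a b)) y \<longrightarrow>
        ldef m st (sclass m st pl a) (lact m st pl (sclass m st pl b) y))"

definition strong_right ::
  "('a \<Rightarrow> 'a \<Rightarrow> 'a) \<Rightarrow> ('a \<Rightarrow> 'a) \<Rightarrow> ('a \<Rightarrow> 'a) \<Rightarrow> bool" where
  "strong_right m st pl \<longleftrightarrow>
     (\<forall>a b. \<forall>y\<in>projections st.
        rdef m pl y (sclass m st pl a) \<and> rdef m pl y (sclass m st pl (m a b)) \<longrightarrow>
        rdef m pl (ract m st pl y (sclass m st pl a)) (sclass m st pl b))"

definition EP_r :: "('a \<Rightarrow> 'a \<Rightarrow> 'a) \<Rightarrow> ('a \<Rightarrow> 'a) \<Rightarrow> ('a \<Rightarrow> 'a) \<Rightarrow> bool" where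
  "EP_r m st pl \<longleftrightarrow> (\<forall>s t u. sigma m st pl s (m t u) \<longrightarrow>
      (\<exists>v. m (pl t) s = m t v \<and> sigma m st pl u v))"

definition EP_l :: "('a \<Rightarrow> 'a \<Rightarrow> 'a) \<Rightarrow> ('a \<Rightarrow> 'a) \<Rightarrow> ('a \<Rightarrow> 'a) \<Rightarrow> bool" where
  "EP_l m st pl \<longleftrightarrow> (\<forall>s t u. sigma m st pl s (m u t) \<longrightarrow>
      (\<exists>v. m s (st t) = m v t \<and> sigma m st pl u v))"

end

theory Submission
  imports Defs
begin

(*
  In a proper restriction semigroup, e \<circ> [a] = (e c)^* for every c in [a] with e <= c^+,
  since all such e c are \<sigma>-related and have the same plus, namely e.  Both directions
  of (1) then rest on the equivalence  (z w)^+ = z^+  <-->  z^* <= w^+.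
  If y <= c^+ and y <= d^+ with c \<sigma> a and d \<sigma> ab, then (EP)^r applied to d \<sigma> cb gives
  c^+ d = c v with v \<sigma> b, and (y c v)^+ = (y d)^+ = y = (y c)^+ says (y c)^* <= v^+.
  Conversely, for s \<sigma> tu put y = (t^+ s)^+; strongness yields w \<sigma> u with (y t)^* <= w^+,
  and v = (y t)^* w satisfies t v = y t w, (t v)^+ = y = (t^+ s)^+ and t v \<sigma> t^+ s,
  so properness forces t^+ s = t v.
  Part (2) is part (1) for the dual restriction semigroup (reversed multiplication, ^* and ^+
  exchanged), which has the same \<sigma> and exchanges the two partial actions.
*)

lemma sigmaI:
  "(\<And>R. rs_congruence m st pl R \<Longrightarrow> \<forall>e\<in>projections st. \<forall>f\<in>projections st. R e f \<Longrightarrow> R a b)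
    \<Longrightarrow> sigma m st pl a b"
  unfolding sigma_def by blast

lemma sigmaD:
  "sigma m st pl a b \<Longrightarrow> rs_congruence m st pl R \<Longrightarrow>
    \<forall>e\<in>projections st. \<forall>f\<in>projections st. R e f \<Longrightarrow> R a b"
  unfolding sigma_def by blast

lemma sigma_rs_congruence: "rs_congruence m st pl (sigma m st pl)"
  unfolding rs_congruence_def
proof (intro conjI allI impI equivpI reflpI sympI transpI)
  fix a b c
  show "sigma m st pl a a"
    by (rule sigmaI) (simp add: rs_congruence_def equivp_reflp)
  show "sigma m st pl b a" if "sigma m st pl a b"
    by (rule sigmaI) (metis sigmaD[OF that] rs_congruence_def equivp_symp)
  show "sigma m st pl a c" if "sigma m st pl a b" "sigma m st pl b c"
    by (rule sigmaI) (metis sigmaD[OF that(1)] sigmaD[OF that(2)] rs_congruence_def equivp_transp)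
  assume ab: "sigma m st pl a b"
  show "sigma m st pl (m a c) (m b c)" "sigma m st pl (m c a) (m c b)"
    "sigma m st pl (st a) (st b)" "sigma m st pl (pl a) (pl b)"
    by (rule sigmaI; simp add: rs_congruence_def sigmaD[OF ab])+
qed

lemma sigma_projections: "e \<in> projections st \<Longrightarrow> f \<in> projections st \<Longrightarrow> sigma m st pl e f"
  unfolding sigma_def by blast

lemma rs_congruence_dual: "rs_congruence (\<lambda>x y. m y x) pl st R = rs_congruence m st pl R"
  unfolding rs_congruence_def by blast

locale restriction_sgrp =
  fixes m :: "'a \<Rightarrow> 'a \<Rightarrow> 'a" and st pl :: "'a \<Rightarrow> 'a"
  assumes restriction_semigroup: "restriction_semigroup m st pl"
begin

lemma mult_assoc: "m (m x y) z = m x (m y z)"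
  and mult_st: "m x (st x) = x"
  and st_commute: "m (st x) (st y) = m (st y) (st x)"
  and st_mult_st: "st (m x (st y)) = m (st x) (st y)"
  and st_ample: "m (st x) y = m y (st (m x y))"
  and pl_mult: "m (pl x) x = x"
  and pl_commute: "m (pl x) (pl y) = m (pl y) (pl x)"
  and pl_pl_mult: "pl (m (pl x) y) = m (pl x) (pl y)"
  and pl_ample: "m x (pl y) = m (pl (m x y)) x"
  and st_pl: "st (pl x) = pl x"
  and pl_st: "pl (st x) = st x"
  using restriction_semigroup unfolding restriction_semigroup_def by blast+

lemma range_pl: "range pl = range st"
proof (intro equalityI image_subsetI)
  show "pl x \<in> range st" for x
    using st_pl[of x] by (metis rangeI)
  show "st x \<in> range pl" for x
    using pl_st[of x] by (metis rangeI)
qed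

lemma pl_in_range: "pl x \<in> range st"
  unfolding range_pl[symmetric] by (rule rangeI)

lemma
  assumes "e \<in> range st"
  shows st_proj: "st e = e" and pl_proj: "pl e = e" and proj_idem: "m e e = e"
proof -
  from assms obtain x where e: "e = st x" by blast
  show "pl e = e"
    unfolding e by (rule pl_st)
  then show "st e = e"
    using st_pl[of e] by simp
  then show "m e e = e"
    using mult_st[of e] by simp
qed

lemma proj_commute: "e \<in> range st \<Longrightarrow> f \<in> range st \<Longrightarrow> m e f = m f e"
  using st_commute by auto

lemma proj_le_mult:
  assumes "e \<in> range st" "f \<in> range st"
  shows "proj_le m (m e f) e" and "proj_le m (m e f) f"
proof -
  have "m (m e f) e = m e (m e f)"
    by (simp add: mult_assoc proj_commute[OF assms(2,1)])
  also have "\<dots> = m e f"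
    by (simp add: proj_idem[OF assms(1)] flip: mult_assoc)
  finally show "proj_le m (m e f) e"
    unfolding proj_le_def ..
  show "proj_le m (m e f) f"
    unfolding proj_le_def by (simp add: mult_assoc proj_idem[OF assms(2)])
qed

lemma pl_mult_eq_pl_iff: "pl (m z w) = pl z \<longleftrightarrow> proj_le m (st z) (pl w)"
proof
  assume eq: "pl (m z w) = pl z"
  have "m z (pl w) = m (pl z) z"
    using pl_ample eq by metis
  then have "m z (pl w) = z"
    by (simp add: pl_mult)
  then have "st (m z (pl w)) = st z" by simp
  then show "proj_le m (st z) (pl w)"
    unfolding proj_le_def by (metis st_mult_st st_pl)
next
  assume "proj_le m (st z) (pl w)"
  then have "m z (pl w) = z"
    unfolding proj_le_def by (metis mult_assoc mult_st st_pl)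
  then have "pl z = m (pl (m z w)) (pl z)"
    by (metis pl_ample pl_pl_mult)
  also have "\<dots> = pl (m (pl z) (m z w))"
    by (simp add: pl_commute pl_pl_mult)
  also have "\<dots> = pl (m z w)"
    by (simp flip: mult_assoc add: pl_mult)
  finally show "pl (m z w) = pl z" by simp
qed

lemma pl_proj_mult: "e \<in> range st \<Longrightarrow> proj_le m e (pl c) \<Longrightarrow> pl (m e c) = e"
  unfolding proj_le_def by (metis pl_pl_mult pl_proj)

abbreviation sigma_rel (infix "\<sim>" 50) where "a \<sim> b \<equiv> sigma m st pl a b"

lemma sigma_refl: "a \<sim> a"
  and sigma_sym: "a \<sim> b \<Longrightarrow> b \<sim> a"
  and sigma_trans [trans]: "a \<sim> b \<Longrightarrow> b \<sim> c \<Longrightarrow> a \<sim> c"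
  and sigma_mult_right: "a \<sim> b \<Longrightarrow> m a c \<sim> m b c"
  and sigma_mult_left: "a \<sim> b \<Longrightarrow> m c a \<sim> m c b"
  using sigma_rs_congruence unfolding rs_congruence_def
  by (meson equivp_reflp equivp_symp equivp_transp)+

lemma sigma_proj_mult:
  assumes "e \<in> range st"
  shows "m e a \<sim> a"
proof -
  have "e \<sim> pl a"
    using assms pl_in_range by (intro sigma_projections) (simp_all add: projections_def)
  then show ?thesis
    using sigma_mult_right[of e "pl a" a] by (simp add: pl_mult)
qed

lemma restriction_sgrp_dual: "restriction_sgrp (\<lambda>x y. m y x) pl st"
  unfolding restriction_sgrp_def restriction_semigroup_def
  by (intro conjI allI; rule mult_assoc[symmetric] pl_mult pl_commute pl_pl_mult pl_ample
      mult_st st_commute st_mult_st st_ample st_pl pl_st)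

lemma sigma_dual: "sigma (\<lambda>x y. m y x) pl st = sigma m st pl"
proof (intro ext)
  show "sigma (\<lambda>x y. m y x) pl st a b = (a \<sim> b)" for a b
    \<comment> \<open>uninstantiated, \<open>rs_congruence_dual\<close> loops: \<open>m\<close> matches \<open>\<lambda>x y. ?m y x\<close>\<close>
    unfolding sigma_def rs_congruence_dual[of m] projections_def range_pl ..
qed

lemma proper_dual: "proper (\<lambda>x y. m y x) pl st = proper m st pl"
  unfolding proper_def sigma_dual by blast

lemma EP_r_dual: "EP_r (\<lambda>x y. m y x) pl st = EP_l m st pl"
  unfolding EP_r_def EP_l_def sigma_dual by blast

lemma proj_le_dual: "e \<in> range st \<Longrightarrow> proj_le (\<lambda>x y. m y x) e (st a) = proj_le m e (st a)"
  unfolding proj_le_def using proj_commute[of e "st a"] by simp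

lemma rdef_dual: "e \<in> range st \<Longrightarrow> rdef (\<lambda>x y. m y x) st e t = ldef m st t e"
  unfolding rdef_def ldef_def by (simp add: proj_le_dual)

lemma ract_dual: "e \<in> range st \<Longrightarrow> ract (\<lambda>x y. m y x) pl st e t = lact m st pl t e"
  unfolding ract_def lact_def by (simp add: proj_le_dual)

lemma strong_right_dual: "strong_right (\<lambda>x y. m y x) pl st = strong_left m st pl"
proof -
  have "lact m st pl t e \<in> range st" for t e
    unfolding lact_def by (rule pl_in_range)
  then show ?thesis
    unfolding strong_right_def strong_left_def projections_def range_pl sclass_def sigma_dual
    by (simp add: rdef_dual ract_dual) blast
qed

end

locale proper_restriction_sgrp = restriction_sgrp +
  assumes proper: "proper m st pl"
begin

lemma proper_pl: "pl a = pl b \<Longrightarrow> a \<sim> b \<Longrightarrow> a = b"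
  using proper unfolding proper_def by blast

lemma rdef_sclass_iff: "rdef m pl e (sclass m st pl a) \<longleftrightarrow> (\<exists>c. a \<sim> c \<and> proj_le m e (pl c))"
  unfolding rdef_def sclass_def by simp

lemma ract_sclass:
  assumes e: "e \<in> range st" and c: "a \<sim> c" "proj_le m e (pl c)"
  shows "ract m st pl e (sclass m st pl a) = st (m e c)"
proof -
  let ?c = "SOME c. c \<in> sclass m st pl a \<and> proj_le m e (pl c)"
  have "?c \<in> sclass m st pl a \<and> proj_le m e (pl ?c)"
    by (rule someI[of _ c]) (simp add: sclass_def c)
  then have ac: "a \<sim> ?c" and le: "proj_le m e (pl ?c)"
    unfolding sclass_def by simp_all
  have "pl (m e ?c) = pl (m e c)"
    using pl_proj_mult[OF e le] pl_proj_mult[OF e c(2)] by simp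
  moreover have "m e ?c \<sim> m e c"
    using sigma_trans[OF sigma_sym[OF ac] c(1)] by (rule sigma_mult_left)
  ultimately have "m e ?c = m e c"
    by (rule proper_pl)
  then show ?thesis
    unfolding ract_def by simp
qed

lemma EP_r_imp_strong_right:
  assumes EP: "EP_r m st pl"
  shows "strong_right m st pl"
  unfolding strong_right_def projections_def
proof (intro allI ballI impI)
  fix a b y
  assume y: "y \<in> range st"
    and "rdef m pl y (sclass m st pl a) \<and> rdef m pl y (sclass m st pl (m a b))"
  then obtain c d where c: "a \<sim> c" "proj_le m y (pl c)" and d: "m a b \<sim> d" "proj_le m y (pl d)"
    unfolding rdef_sclass_iff by blast
  have "d \<sim> m c b"
    using sigma_sym[OF d(1)] sigma_mult_right[OF c(1)] by (rule sigma_trans)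
  with EP obtain v where v: "m (pl c) d = m c v" "b \<sim> v"
    unfolding EP_r_def by blast
  have "m (m y c) v = m (m y (pl c)) d"
    by (simp add: mult_assoc v(1))
  also have "\<dots> = m y d"
    using c(2) by (simp add: proj_le_def)
  finally have "m (m y c) v = m y d" .
  then have "pl (m (m y c) v) = pl (m y c)"
    using y c(2) d(2) by (simp add: pl_proj_mult)
  then have "proj_le m (st (m y c)) (pl v)"
    by (rule pl_mult_eq_pl_iff[THEN iffD1])
  then show "rdef m pl (ract m st pl y (sclass m st pl a)) (sclass m st pl b)"
    unfolding ract_sclass[OF y c] rdef_sclass_iff using v(2) by blast
qed

lemma strong_right_imp_EP_r:
  assumes strong: "strong_right m st pl"
  shows "EP_r m st pl"
  unfolding EP_r_def
proof (intro allI impI)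
  fix s t u
  assume s: "s \<sim> m t u"
  define y where "y = pl (m (pl t) s)"
  have y: "y \<in> range st"
    unfolding y_def by (rule pl_in_range)
  have "y = m (pl t) (pl s)"
    unfolding y_def by (rule pl_pl_mult)
  then have yt: "proj_le m y (pl t)" and ys: "proj_le m y (pl s)"
    using proj_le_mult[OF pl_in_range pl_in_range] by simp_all
  have "rdef m pl y (sclass m st pl t)" and "rdef m pl y (sclass m st pl (m t u))"
    unfolding rdef_sclass_iff using sigma_refl yt sigma_sym[OF s] ys by blast+
  with strong y have "rdef m pl (ract m st pl y (sclass m st pl t)) (sclass m st pl u)"
    unfolding strong_right_def projections_def by blast
  then obtain w where w: "u \<sim> w" "proj_le m (st (m y t)) (pl w)"
    unfolding ract_sclass[OF y sigma_refl yt] rdef_sclass_iff by blast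
  define v where "v = m (st (m y t)) w"
  have "m t v = m (m t (st (m y t))) w"
    unfolding v_def by (simp add: mult_assoc)
  also have "m t (st (m y t)) = m y t"
    using st_ample[of y t] by (simp add: st_proj[OF y])
  finally have tv: "m t v = m (m y t) w" .
  have "pl (m t v) = pl (m y t)"
    unfolding tv using w(2) by (rule pl_mult_eq_pl_iff[THEN iffD2])
  also have "\<dots> = pl (m (pl t) s)"
    using pl_proj_mult[OF y yt] by (simp add: y_def)
  finally have "pl (m t v) = pl (m (pl t) s)" .
  moreover have "m t v \<sim> m (pl t) s"
  proof -
    have "m t v \<sim> m t w"
      unfolding tv mult_assoc by (rule sigma_proj_mult[OF y])
    also have "m t w \<sim> m t u"
      using sigma_sym[OF w(1)] by (rule sigma_mult_left)
    also have "m t u \<sim> m (pl t) s"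
      using sigma_sym[OF s] sigma_sym[OF sigma_proj_mult[OF pl_in_range]] by (rule sigma_trans)
    finally show ?thesis .
  qed
  ultimately have "m t v = m (pl t) s"
    by (rule proper_pl)
  moreover have "u \<sim> v"
    unfolding v_def using w(1) sigma_sym[OF sigma_proj_mult[OF rangeI]] by (rule sigma_trans)
  ultimately show "\<exists>v. m (pl t) s = m t v \<and> u \<sim> v"
    by (intro exI[of _ v]) simp
qed

lemma EP_r_iff_strong_right: "EP_r m st pl \<longleftrightarrow> strong_right m st pl"
  using EP_r_imp_strong_right strong_right_imp_EP_r by blast

end

theorem proposition3p7:
  fixes m :: "'a \<Rightarrow> 'a \<Rightarrow> 'a" and st pl :: "'a \<Rightarrow> 'a"
  assumes "restriction_semigroup m st pl" and "proper m st pl"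
  shows "(EP_r m st pl \<longleftrightarrow> strong_right m st pl) \<and>
         (EP_l m st pl \<longleftrightarrow> strong_left m st pl)"
proof -
  interpret S: proper_restriction_sgrp m st pl
    using assms by unfold_locales
  interpret D: proper_restriction_sgrp "\<lambda>x y. m y x" pl st
    using S.restriction_sgrp_dual assms(2) S.proper_dual
    by (simp add: proper_restriction_sgrp_def proper_restriction_sgrp_axioms_def)
  show ?thesis
    using S.EP_r_iff_strong_right D.EP_r_iff_strong_right
    by (simp add: S.EP_r_dual S.strong_right_dual)
qed

end
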